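(* Let $X\in T^1(\Sigma)$. Then $X^+X=X=XX^*$ (with pruned operations).
   Context: Let $\Sigma$ be a set. A $\Sigma$-tree is a finite directed graph whose underlying undirected graph is a tree, edges labelled by elements of $\Sigma$, with distinguished start and end vertices such that there is a (possibly empty) directed path from start to end vertex. A morphism $X\to Y$ maps vertices to vertices and edges to edges, preserving initial vertex, terminal vertex and label of each edge, and mapping start/end vertex to start/end vertex; isomorphisms are morphisms bijective on vertices and edges. A retraction is an idempotent morphism $X\to X$, its image a retract; $X$ is pruned if it admits no non-identity retraction. Every tree $X$ has a pruned retract, unique up to isomorphism, whose isomorphism type is $\overline{X}$. $T^1(\Sigma)$ is the set of isomorphism types of pruned $\Sigma$-trees. Unpruned operations: $X\times Y$ identifies the end vertex of (a copy of) $X$ with the start vertex of (a disjoint copy of) $Y$, start vertex that of $X$, end vertex that of $Y$; $X^{(+)}$ is $X$ with end vertex moved to the start vertex; $X^{( * )}$ is $X$ with start vertex moved to the end vertex. Pruned operations: $XY=\overline{X\times Y}$, $X^+=\overline{X^{(+)}}$, $X^*=\overline{X^{( * )}}$. *)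

theory Defs
  imports Main
begin

record ('v, 'l) stree =
  verts :: "'v set"
  edges :: "('v \<times> 'l \<times> 'v) set"
  st :: 'v
  en :: 'v

definition undir_adj :: "('v, 'l) stree \<Rightarrow> ('v \<times> 'v) set" where
  "undir_adj X = {(u, v). \<exists>a. (u, a, v) \<in> edges X \<or> (v, a, u) \<in> edges X}"

definition dir_adj :: "('v, 'l) stree \<Rightarrow> ('v \<times> 'v) set" where
  "dir_adj X = {(u, v). \<exists>a. (u, a, v) \<in> edges X}"

text \<open>The underlying undirected multigraph is a tree: it is connected and has
  exactly |V| - 1 edges.\<close>
definition is_tree :: "'l set \<Rightarrow> ('v, 'l) stree \<Rightarrow> bool" where
  "is_tree Sig X \<longleftrightarrow>
     finite (verts X) \<and> verts X \<noteq> {} \<and>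
     edges X \<subseteq> verts X \<times> Sig \<times> verts X \<and>
     finite (edges X) \<and> card (edges X) + 1 = card (verts X) \<and>
     (\<forall>u\<in>verts X. \<forall>v\<in>verts X. (u, v) \<in> (undir_adj X)\<^sup>*) \<and>
     st X \<in> verts X \<and> en X \<in> verts X \<and>
     (st X, en X) \<in> (dir_adj X)\<^sup>*"

definition emap :: "('v \<Rightarrow> 'w) \<Rightarrow> 'v \<times> 'l \<times> 'v \<Rightarrow> 'w \<times> 'l \<times> 'w" where
  "emap f e = (case e of (u, a, v) \<Rightarrow> (f u, a, f v))"

definition morph :: "('v, 'l) stree \<Rightarrow> ('w, 'l) stree \<Rightarrow> ('v \<Rightarrow> 'w) \<Rightarrow> bool" where
  "morph X Y f \<longleftrightarrow>
     f ` verts X \<subseteq> verts Y \<and> emap f ` edges X \<subseteq> edges Y \<and>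
     f (st X) = st Y \<and> f (en X) = en Y"

definition tiso :: "('v, 'l) stree \<Rightarrow> ('w, 'l) stree \<Rightarrow> bool" where
  "tiso X Y \<longleftrightarrow> (\<exists>f. morph X Y f \<and> bij_betw f (verts X) (verts Y) \<and>
                        bij_betw (emap f) (edges X) (edges Y))"

definition retraction :: "('v, 'l) stree \<Rightarrow> ('v \<Rightarrow> 'v) \<Rightarrow> bool" where
  "retraction X r \<longleftrightarrow> morph X X r \<and> (\<forall>v\<in>verts X. r (r v) = r v)"

definition retract_img :: "('v, 'l) stree \<Rightarrow> ('v \<Rightarrow> 'v) \<Rightarrow> ('v, 'l) stree" where
  "retract_img X r = \<lparr>verts = r ` verts X, edges = emap r ` edges X, st = st X, en = en X\<rparr>"

definition pruned :: "('v, 'l) stree \<Rightarrow> bool" where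
  "pruned X \<longleftrightarrow> (\<forall>r. retraction X r \<longrightarrow> (\<forall>v\<in>verts X. r v = v))"

text \<open>Membership (of the isomorphism type) in T^1(Sigma).\<close>
definition pruned_tree :: "'l set \<Rightarrow> ('v, 'l) stree \<Rightarrow> bool" where
  "pruned_tree Sig X \<longleftrightarrow> is_tree Sig X \<and> pruned X"

text \<open>Y is a pruned retract of X (so Y represents the type overline X).\<close>
definition is_pruned_retract :: "('v, 'l) stree \<Rightarrow> ('v, 'l) stree \<Rightarrow> bool" where
  "is_pruned_retract Y X \<longleftrightarrow> (\<exists>r. retraction X r \<and> Y = retract_img X r \<and> pruned Y)"

text \<open>Unpruned product: disjoint copies, end of X glued to start of Y.\<close>
definition injY :: "('v, 'l) stree \<Rightarrow> ('w, 'l) stree \<Rightarrow> 'w \<Rightarrow> 'v + 'w" where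
  "injY X Y y = (if y = st Y then Inl (en X) else Inr y)"

definition tprod :: "('v, 'l) stree \<Rightarrow> ('w, 'l) stree \<Rightarrow> ('v + 'w, 'l) stree" where
  "tprod X Y = \<lparr>verts = Inl ` verts X \<union> injY X Y ` verts Y,
                edges = emap Inl ` edges X \<union> emap (injY X Y) ` edges Y,
                st = Inl (st X), en = injY X Y (en Y)\<rparr>"

definition tplus :: "('v, 'l) stree \<Rightarrow> ('v, 'l) stree" where
  "tplus X = X\<lparr>en := st X\<rparr>"

definition tstar :: "('v, 'l) stree \<Rightarrow> ('v, 'l) stree" where
  "tstar X = X\<lparr>st := en X\<rparr>"

end

theory Submission
  imports Defs "HOL-Library.FuncSet"
begin

text \<open>For pruned X, the product X^+ X (and likewise X X^* ) admits morphisms to X (fold the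
  retract of X^+, which lies inside X and starts and ends at the start of X, back onto X) and
  from X (the second factor).  Its pruned retract Q therefore maps to X and back.  In a finite
  pruned structure every endomorphism has a power that is idempotent, hence a retraction, hence
  the identity; so every endomorphism is injective, and counting vertices and edges shows that
  the two morphisms between Q and X are isomorphisms.\<close>

definition finite_graph :: "('v, 'l) stree \<Rightarrow> bool" where
  "finite_graph A \<longleftrightarrow> finite (verts A) \<and> finite (edges A) \<and> edges A \<subseteq> verts A \<times> UNIV \<times> verts A"

lemma emap_comp: "emap (g \<circ> f) = emap g \<circ> emap f"
  by (auto simp: emap_def fun_eq_iff split: prod.splits)

lemma morph_comp: "morph X Y f \<Longrightarrow> morph Y Z g \<Longrightarrow> morph X Z (g \<circ> f)"
  unfolding morph_def emap_comp image_comp[symmetric] by (metis image_mono order_trans comp_apply)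

lemma morph_funpow: "morph A A e \<Longrightarrow> morph A A (e ^^ n)"
proof (induction n)
  case 0
  then show ?case by (auto simp: morph_def emap_def split: prod.splits)
next
  case (Suc n)
  then show ?case using morph_comp[of A A "e ^^ n" A e] by (simp only: funpow.simps)
qed

lemma funpow_in_set: "e ` S \<subseteq> S \<Longrightarrow> v \<in> S \<Longrightarrow> (e ^^ k) v \<in> S"
  by (induction k) auto

lemma funpow_periodic:
  fixes e :: "'a \<Rightarrow> 'a"
  assumes "\<forall>v\<in>S. (e ^^ i) v = (e ^^ (i + p)) v" and "v \<in> S"
  shows "(e ^^ (k + i + t * p)) v = (e ^^ (k + i)) v"
proof (induction t)
  case (Suc t)
  have "(e ^^ (k + i + Suc t * p)) v = (e ^^ (k + t * p)) ((e ^^ (i + p)) v)"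
    by (simp add: algebra_simps flip: funpow_add[THEN fun_cong, unfolded comp_def])
  also have "\<dots> = (e ^^ (k + t * p)) ((e ^^ i) v)"
    using assms by simp
  also have "\<dots> = (e ^^ (k + i + t * p)) v"
    by (simp add: algebra_simps flip: funpow_add[THEN fun_cong, unfolded comp_def])
  finally show ?case using Suc by simp
qed simp

lemma finite_self_map_idempotent_power:
  assumes "finite S" and "e ` S \<subseteq> S"
  shows "\<exists>n>0. \<forall>v\<in>S. (e ^^ n) ((e ^^ n) v) = (e ^^ n) v"
proof -
  define F where "F k = restrict (e ^^ k) S" for k
  have "range F \<subseteq> S \<rightarrow>\<^sub>E S"
    using funpow_in_set[OF assms(2)] by (auto simp: F_def)
  then have "finite (range F)"
    using assms(1) by (meson finite_PiE finite_subset)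
  then have "\<not> inj F"
    using finite_imageD infinite_UNIV_nat by blast
  then obtain i j where "i < j" "F i = F j"
    unfolding inj_def by (metis linorder_neqE_nat)
  define p where "p = j - i"
  have "p > 0"
    using \<open>i < j\<close> by (simp add: p_def)
  have "\<forall>v\<in>S. (e ^^ i) v = (e ^^ (i + p)) v"
    using \<open>i < j\<close> \<open>F i = F j\<close> unfolding p_def F_def
    by (metis le_add_diff_inverse less_imp_le restrict_apply')
  \<comment> \<open>a positive multiple of the period p that is at least the preperiod i\<close>
  define n where "n = (i + 1) * p"
  have "n > 0"
    using \<open>p > 0\<close> by (simp add: n_def)
  have "n \<ge> i"
    using \<open>p > 0\<close> by (simp add: n_def trans_le_add2)
  have "(e ^^ n) ((e ^^ n) v) = (e ^^ n) v" if "v \<in> S" for v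
  proof -
    have "(e ^^ n) ((e ^^ n) v) = (e ^^ ((n - i) + i + (i + 1) * p)) v"
      using \<open>n \<ge> i\<close> by (simp add: n_def flip: funpow_add[THEN fun_cong, unfolded comp_def])
    also have "\<dots> = (e ^^ ((n - i) + i)) v"
      by (rule funpow_periodic[OF \<open>\<forall>v\<in>S. _\<close> that])
    also have "\<dots> = (e ^^ n) v"
      using \<open>n \<ge> i\<close> by simp
    finally show ?thesis .
  qed
  then show ?thesis using \<open>n > 0\<close> by blast
qed

lemma pruned_endomorphism_power_id:
  assumes "pruned A" "finite (verts A)" "morph A A e"
  shows "\<exists>n>0. \<forall>v\<in>verts A. (e ^^ n) v = v"
proof -
  have "e ` verts A \<subseteq> verts A"
    using assms(3) by (simp add: morph_def)
  then obtain n where n: "n > 0" "\<forall>v\<in>verts A. (e ^^ n) ((e ^^ n) v) = (e ^^ n) v"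
    using finite_self_map_idempotent_power assms(2) by blast
  then have "retraction A (e ^^ n)"
    using morph_funpow[OF assms(3)] by (simp add: retraction_def)
  with assms(1) have "\<forall>v\<in>verts A. (e ^^ n) v = v"
    unfolding pruned_def by (elim allE impE)
  with n(1) show ?thesis by blast
qed

lemma pruned_endomorphism_inj_on:
  assumes "pruned A" "finite (verts A)" "morph A A e"
  shows "inj_on e (verts A)"
proof
  fix x y assume "x \<in> verts A" "y \<in> verts A" "e x = e y"
  obtain n where n: "n > 0" "\<forall>v\<in>verts A. (e ^^ n) v = v"
    using pruned_endomorphism_power_id[OF assms] by blast
  then obtain m where "n = Suc m"
    using gr0_implies_Suc by blast
  then have "(e ^^ n) x = (e ^^ n) y"
    using \<open>e x = e y\<close> by (simp only: funpow_Suc_right o_apply)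
  then show "x = y"
    using n(2)[rule_format, OF \<open>x \<in> verts A\<close>] n(2)[rule_format, OF \<open>y \<in> verts A\<close>] by argo
qed

lemma inj_on_emap:
  assumes "inj_on f (verts A)" "edges A \<subseteq> verts A \<times> UNIV \<times> verts A"
  shows "inj_on (emap f) (edges A)"
proof (rule inj_onI)
  fix d d' assume "d \<in> edges A" "d' \<in> edges A" "emap f d = emap f d'"
  with assms show "d = d'"
    by (cases d; cases d') (auto simp: emap_def dest: inj_onD)
qed

lemma tiso_if_pruned_morph_both_ways:
  assumes "pruned A" "pruned B" "finite_graph A" "finite_graph B"
    and f: "morph A B f" and g: "morph B A g"
  shows "tiso A B"
proof -
  have "inj_on (g \<circ> f) (verts A)" "inj_on (f \<circ> g) (verts B)"
    using pruned_endomorphism_inj_on morph_comp f g assms(1-4) by (metis finite_graph_def)+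
  then have inj: "inj_on f (verts A)" "inj_on g (verts B)"
    using inj_on_imageI2 by blast+
  then have einj: "inj_on (emap f) (edges A)" "inj_on (emap g) (edges B)"
    using inj_on_emap assms(3,4) by (auto simp: finite_graph_def)
  have sub: "f ` verts A \<subseteq> verts B" "emap f ` edges A \<subseteq> edges B"
            "g ` verts B \<subseteq> verts A" "emap g ` edges B \<subseteq> edges A"
    using f g by (auto simp: morph_def)
  have "card (verts A) = card (verts B)" "card (edges A) = card (edges B)"
    using card_inj_on_le[OF inj(1) sub(1)] card_inj_on_le[OF inj(2) sub(3)]
          card_inj_on_le[OF einj(1) sub(2)] card_inj_on_le[OF einj(2) sub(4)] assms(3,4)
    by (auto simp: finite_graph_def)
  then have "f ` verts A = verts B" "emap f ` edges A = edges B"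
    using card_subset_eq sub(1,2) card_image inj(1) einj(1) assms(4)
    by (metis finite_graph_def)+
  then show ?thesis
    unfolding tiso_def bij_betw_def using f inj(1) einj(1) by blast
qed

lemma retraction_morph_onto: "retraction A r \<Longrightarrow> morph A (retract_img A r) r"
  by (auto simp: retraction_def morph_def retract_img_def)

lemma is_pruned_retract_subgraph:
  assumes "is_pruned_retract P A"
  shows "verts P \<subseteq> verts A" "edges P \<subseteq> edges A" "st P = st A" "en P = en A"
  using assms by (auto simp: is_pruned_retract_def retraction_def morph_def retract_img_def)

lemma morph_restrict_source:
  assumes "morph A B h" "verts P \<subseteq> verts A" "edges P \<subseteq> edges A" "st P = st A" "en P = en A"
  shows "morph P B h"
  using assms unfolding morph_def by (metis image_mono order_trans)

lemma finite_graph_retract_img: "finite_graph A \<Longrightarrow> finite_graph (retract_img A r)"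
  by (force simp: finite_graph_def retract_img_def emap_def)

lemma finite_graph_tprod: "finite_graph A \<Longrightarrow> finite_graph B \<Longrightarrow> finite_graph (tprod A B)"
  unfolding finite_graph_def tprod_def by (auto simp: emap_def)

lemma finite_graph_pruned_retract: "is_pruned_retract P A \<Longrightarrow> finite_graph A \<Longrightarrow> finite_graph P"
  using finite_graph_retract_img by (auto simp: is_pruned_retract_def)

lemma is_tree_finite_graph: "is_tree Sig X \<Longrightarrow> finite_graph X"
  by (auto simp: is_tree_def finite_graph_def)

lemma emap_left_inverse: "(\<And>x. g (f x) = x) \<Longrightarrow> emap g (emap f e) = e"
  by (auto simp: emap_def split: prod.splits)

lemma tprod_loop_left_morphs:
  assumes "verts P \<subseteq> verts X" "edges P \<subseteq> edges X" "st P = st X" "en P = st X"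
  shows "morph (tprod P X) X (case_sum id id)" "morph X (tprod P X) (injY P X)"
proof -
  have fold: "case_sum id id (injY P X y) = y" for y
    using assms(4) by (simp add: injY_def)
  then have "emap (case_sum id id) ` edges (tprod P X) = edges P \<union> edges X"
    by (simp add: tprod_def image_Un image_image emap_left_inverse)
  then show "morph (tprod P X) X (case_sum id id)"
    unfolding morph_def using assms fold by (auto simp: tprod_def)
  show "morph X (tprod P X) (injY P X)"
    unfolding morph_def using assms by (auto simp: tprod_def injY_def)
qed

lemma tprod_loop_right_morphs:
  assumes "verts R \<subseteq> verts X" "edges R \<subseteq> edges X" "st R = en X" "en R = en X"
  shows "morph (tprod X R) X (case_sum id id)" "morph X (tprod X R) Inl"
proof -
  have fold: "case_sum id id (injY X R y) = y" for y
    using assms(3) by (simp add: injY_def)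
  then have "emap (case_sum id id) ` edges (tprod X R) = edges X \<union> edges R"
    by (simp add: tprod_def image_Un image_image emap_left_inverse)
  then show "morph (tprod X R) X (case_sum id id)"
    unfolding morph_def using assms fold by (auto simp: tprod_def)
  show "morph X (tprod X R) Inl"
    unfolding morph_def using assms by (auto simp: tprod_def injY_def)
qed

lemma tiso_pruned_retract_if_morph_both_ways:
  assumes "is_pruned_retract Q Y" "pruned X" "finite_graph X" "finite_graph Y"
    and "morph Y X f" "morph X Y g"
  shows "tiso Q X"
proof -
  obtain r where r: "retraction Y r" "Q = retract_img Y r" "pruned Q"
    using assms(1) by (auto simp: is_pruned_retract_def)
  have "morph Q X f"
    using morph_restrict_source[OF assms(5) is_pruned_retract_subgraph[OF assms(1)]] .
  moreover have "morph X Q (r \<circ> g)"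
    using morph_comp[OF assms(6)] retraction_morph_onto r(1,2) by blast
  ultimately show ?thesis
    using tiso_if_pruned_morph_both_ways r(2,3) finite_graph_retract_img assms(2-4) by blast
qed

theorem proposition4p7:
  fixes Sig :: "'l set" and X :: "('v, 'l) stree"
  assumes "pruned_tree Sig X"
  shows "(\<forall>P Q. is_pruned_retract P (tplus X) \<and> is_pruned_retract Q (tprod P X)
                 \<longrightarrow> tiso Q X) \<and>
         (\<forall>R Q. is_pruned_retract R (tstar X) \<and> is_pruned_retract Q (tprod X R)
                 \<longrightarrow> tiso Q X)"
proof -
  have X: "pruned X" "finite_graph X"
    using assms is_tree_finite_graph by (auto simp: pruned_tree_def)
  have left: "tiso Q X"
    if P: "is_pruned_retract P (tplus X)" and Q: "is_pruned_retract Q (tprod P X)" for P Q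
  proof -
    have "verts P \<subseteq> verts X" "edges P \<subseteq> edges X" "st P = st X" "en P = st X"
      using is_pruned_retract_subgraph[OF P] by (simp_all add: tplus_def)
    moreover have "finite_graph P"
      using finite_graph_pruned_retract[OF P] X(2) by (simp add: finite_graph_def tplus_def)
    ultimately show ?thesis
      using tiso_pruned_retract_if_morph_both_ways[OF Q X] tprod_loop_left_morphs
            finite_graph_tprod X(2) by blast
  qed
  have right: "tiso Q X"
    if R: "is_pruned_retract R (tstar X)" and Q: "is_pruned_retract Q (tprod X R)" for R Q
  proof -
    have "verts R \<subseteq> verts X" "edges R \<subseteq> edges X" "st R = en X" "en R = en X"
      using is_pruned_retract_subgraph[OF R] by (simp_all add: tstar_def)
    moreover have "finite_graph R"
      using finite_graph_pruned_retract[OF R] X(2) by (simp add: finite_graph_def tstar_def)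
    ultimately show ?thesis
      using tiso_pruned_retract_if_morph_both_ways[OF Q X] tprod_loop_right_morphs
            finite_graph_tprod X(2) by blast
  qed
  show ?thesis
    using left right by blast
qed

end
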